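(* Let $T=(V,E)$ be a finite rooted tree, $\Pr$ a probability distribution over a finite set of queries, $R\subseteq V$, and $u\in V\setminus R$. Let $\mathrm{hsd}(u,R)=\{v\in T(u)\cap R:\ \mathrm{path}(v,u)\cap R=\emptyset\}$ and let $\mathrm{lsa}(u,R)\in A(u)\cup\{\epsilon\}$ be the lowest proper ancestor of $u$ in $R$ ($\epsilon$ if none). Then the marginal benefit $\Delta(u\mid R)=B(R\cup\{u\})-B(R)$ satisfies $$\Delta(u\mid R)=\mathbb{E}[I(u,\mathrm{lsa}(u,R))]\Big(C(u)-\sum_{v\in\mathrm{hsd}(u,R)}C(v)\Big).$$
   Context: $T=(V,E)$ is a finite rooted tree; $T(u)$ is the set of nodes of the subtree rooted at $u$ (including $u$); $A(u)$ the set of proper ancestors of $u$; for a node $v\in T(u)$, $v\ne u$, $\mathrm{path}(v,u)$ is the set of nodes strictly between $v$ and $u$. Each non-leaf node is associated with a variable of a finite set $X$; $\mathrm{vars}(u)$ is the set of variables of nodes of $T(u)$; each query $q$ determines $Z_q\subseteq X$. For $S\subseteq V$, $w\in V$: $I_q(w,S)=1$ iff $w\in S$, $\mathrm{vars}(w)\subseteq Z_q$, and no $x\in A(w)\cap S$ has $\mathrm{vars}(x)\subseteq Z_q$; else $0$; $\mathbb{E}[I(w,S)]=\sum_q\Pr(q)I_q(w,S)$. Nodes have partial costs $c(x)$ and total costs $C(w)=\sum_{x\in T(w)}c(x)$. Benefit $B(S)=\sum_{w\in S}\mathbb{E}[I(w,S)]C(w)$. Notation: for $a\in A(u)$, $\mathbb{E}[I(u,a)]:=\mathbb{E}[I(u,\{u,a\})]$,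 and $\mathbb{E}[I(u,\epsilon)]:=\mathbb{E}[I(u,\{u\})]$. *)

theory Defs
  imports Complex_Main
begin

text \<open>A finite rooted tree on node set V with root r, given by a parent function par
  (the value par r is irrelevant). Every node reaches the root by iterating par.\<close>
definition rooted_tree :: "'a set \<Rightarrow> ('a \<Rightarrow> 'a) \<Rightarrow> 'a \<Rightarrow> bool" where
  "rooted_tree V par r \<longleftrightarrow> finite V \<and> r \<in> V \<and> (\<forall>v\<in>V. v \<noteq> r \<longrightarrow> par v \<in> V)
     \<and> (\<forall>v\<in>V. \<exists>n. (par ^^ n) v = r)"

definition depth :: "('a \<Rightarrow> 'a) \<Rightarrow> 'a \<Rightarrow> 'a \<Rightarrow> nat" where
  "depth par r v = (LEAST n. (par ^^ n) v = r)"

definition ancestors :: "('a \<Rightarrow> 'a) \<Rightarrow> 'a \<Rightarrow> 'a \<Rightarrow> 'a set" where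
  "ancestors par r u = {(par ^^ k) u | k. 0 < k \<and> k \<le> depth par r u}"

definition subtree :: "'a set \<Rightarrow> ('a \<Rightarrow> 'a) \<Rightarrow> 'a \<Rightarrow> 'a \<Rightarrow> 'a set" where
  "subtree V par r u = {v \<in> V. v = u \<or> u \<in> ancestors par r v}"

text \<open>path(v,u): nodes strictly between v and u (for v in T(u), v different from u).\<close>
definition tpath :: "'a set \<Rightarrow> ('a \<Rightarrow> 'a) \<Rightarrow> 'a \<Rightarrow> 'a \<Rightarrow> 'a \<Rightarrow> 'a set" where
  "tpath V par r v u = (ancestors par r v \<inter> subtree V par r u) - {u}"

definition is_leaf :: "'a set \<Rightarrow> ('a \<Rightarrow> 'a) \<Rightarrow> 'a \<Rightarrow> 'a \<Rightarrow> bool" where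
  "is_leaf V par r x \<longleftrightarrow> \<not> (\<exists>y\<in>V. y \<noteq> r \<and> par y = x)"

definition vars :: "'a set \<Rightarrow> ('a \<Rightarrow> 'a) \<Rightarrow> 'a \<Rightarrow> ('a \<Rightarrow> 'x) \<Rightarrow> 'a \<Rightarrow> 'x set" where
  "vars V par r var u = var ` {x \<in> subtree V par r u. \<not> is_leaf V par r x}"

definition Iq :: "'a set \<Rightarrow> ('a \<Rightarrow> 'a) \<Rightarrow> 'a \<Rightarrow> ('a \<Rightarrow> 'x) \<Rightarrow> 'x set \<Rightarrow> 'a \<Rightarrow> 'a set \<Rightarrow> real" where
  "Iq V par r var Zq w S =
     (if w \<in> S \<and> vars V par r var w \<subseteq> Zq
         \<and> \<not> (\<exists>x\<in>ancestors par r w \<inter> S. vars V par r var x \<subseteq> Zq) then 1 else 0)"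

definition EI :: "'a set \<Rightarrow> ('a \<Rightarrow> 'a) \<Rightarrow> 'a \<Rightarrow> ('a \<Rightarrow> 'x) \<Rightarrow> 'q set \<Rightarrow> ('q \<Rightarrow> real)
     \<Rightarrow> ('q \<Rightarrow> 'x set) \<Rightarrow> 'a \<Rightarrow> 'a set \<Rightarrow> real" where
  "EI V par r var Q Pr Z w S = (\<Sum>q\<in>Q. Pr q * Iq V par r var (Z q) w S)"

definition Ctot :: "'a set \<Rightarrow> ('a \<Rightarrow> 'a) \<Rightarrow> 'a \<Rightarrow> ('a \<Rightarrow> real) \<Rightarrow> 'a \<Rightarrow> real" where
  "Ctot V par r c w = (\<Sum>x\<in>subtree V par r w. c x)"

definition benefit :: "'a set \<Rightarrow> ('a \<Rightarrow> 'a) \<Rightarrow> 'a \<Rightarrow> ('a \<Rightarrow> 'x) \<Rightarrow> 'q set \<Rightarrow> ('q \<Rightarrow> real)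
     \<Rightarrow> ('q \<Rightarrow> 'x set) \<Rightarrow> ('a \<Rightarrow> real) \<Rightarrow> 'a set \<Rightarrow> real" where
  "benefit V par r var Q Pr Z c S =
     (\<Sum>w\<in>S. EI V par r var Q Pr Z w S * Ctot V par r c w)"

definition hsd :: "'a set \<Rightarrow> ('a \<Rightarrow> 'a) \<Rightarrow> 'a \<Rightarrow> 'a \<Rightarrow> 'a set \<Rightarrow> 'a set" where
  "hsd V par r u R = {v \<in> subtree V par r u \<inter> R. tpath V par r v u \<inter> R = {}}"

text \<open>lsa(u,R): the lowest proper ancestor of u lying in R; None encodes epsilon.\<close>
definition lsa :: "('a \<Rightarrow> 'a) \<Rightarrow> 'a \<Rightarrow> 'a \<Rightarrow> 'a set \<Rightarrow> 'a option" where
  "lsa par r u R =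
     (if ancestors par r u \<inter> R = {} then None
      else Some (THE a. a \<in> ancestors par r u \<inter> R \<and>
                   (\<forall>b\<in>ancestors par r u \<inter> R. b = a \<or> b \<in> ancestors par r a)))"

text \<open>E[I(u,a)] = E[I(u,{u,a})] and E[I(u,epsilon)] = E[I(u,{u})].\<close>
definition EI_lsa :: "'a set \<Rightarrow> ('a \<Rightarrow> 'a) \<Rightarrow> 'a \<Rightarrow> ('a \<Rightarrow> 'x) \<Rightarrow> 'q set \<Rightarrow> ('q \<Rightarrow> real)
     \<Rightarrow> ('q \<Rightarrow> 'x set) \<Rightarrow> 'a \<Rightarrow> 'a option \<Rightarrow> real" where
  "EI_lsa V par r var Q Pr Z u a =
     (case a of None \<Rightarrow> EI V par r var Q Pr Z u {u}
              | Some b \<Rightarrow> EI V par r var Q Pr Z u {u, b})"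

end

theory Submission
  imports Defs
begin

text \<open>Call x covered by a query q if vars x \<subseteq> Z_q; coverage passes from a node to all its
  descendants. Then I_q(w,S) = 1 iff w is the topmost covered node of S on its root path.
  Adding u to R changes I_q(w, .) only at w = u and at the nodes w \<in> R below u. Such a w loses
  its indicator exactly when u is topmost covered in R \<union> {u} and no node of R strictly between
  w and u blocks w, i.e. w \<in> hsd(u,R): the nodes in between are covered as soon as u is.
  Whether u is topmost covered depends only on the lowest ancestor of u in R, whence the factor
  E[I(u, lsa(u,R))].\<close>

lemma funpow_funpow_le: "k \<le> n \<Longrightarrow> (f ^^ (n - k)) ((f ^^ k) v) = (f ^^ n) v"
  by (metis funpow_add le_add_diff_inverse2 o_apply)

locale finite_rooted_tree =
  fixes V :: "'a set" and par :: "'a \<Rightarrow> 'a" and r :: 'a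
  assumes rooted_tree: "rooted_tree V par r"
begin

lemma finite_V: "finite V"
  using rooted_tree unfolding rooted_tree_def by blast

lemma funpow_depth_eq_root: "v \<in> V \<Longrightarrow> (par ^^ depth par r v) v = r"
  using rooted_tree unfolding rooted_tree_def depth_def by (metis (mono_tags, lifting) LeastI_ex)

lemma funpow_neq_root: "n < depth par r v \<Longrightarrow> (par ^^ n) v \<noteq> r"
  unfolding depth_def using not_less_Least by blast

lemma depth_funpow:
  assumes "v \<in> V" "k \<le> depth par r v"
  shows "depth par r ((par ^^ k) v) = depth par r v - k"
  unfolding depth_def[of par r "(par ^^ k) v"]
proof (rule Least_equality)
  show "(par ^^ (depth par r v - k)) ((par ^^ k) v) = r"
    using assms funpow_depth_eq_root by (simp add: funpow_funpow_le)
next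
  fix n assume "(par ^^ n) ((par ^^ k) v) = r"
  then have "(par ^^ (n + k)) v = r" by (simp add: funpow_add)
  then have "\<not> n + k < depth par r v" using funpow_neq_root by blast
  then show "depth par r v - k \<le> n" by simp
qed

lemma funpow_in_V: "v \<in> V \<Longrightarrow> k \<le> depth par r v \<Longrightarrow> (par ^^ k) v \<in> V"
proof (induction k)
  case (Suc k)
  then have "(par ^^ k) v \<in> V" "(par ^^ k) v \<noteq> r" using funpow_neq_root by auto
  then show ?case using rooted_tree unfolding rooted_tree_def by simp
qed simp

lemma ancestor_in_V_depth_less:
  assumes "v \<in> V" "x \<in> ancestors par r v"
  shows "x \<in> V \<and> depth par r x < depth par r v"
  using assms funpow_in_V depth_funpow unfolding ancestors_def by auto

lemma ancestors_subset_V: "v \<in> V \<Longrightarrow> ancestors par r v \<subseteq> V"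
  using ancestor_in_V_depth_less by blast

lemma not_ancestor_self: "v \<in> V \<Longrightarrow> v \<notin> ancestors par r v"
  using ancestor_in_V_depth_less by blast

lemma ancestors_asym:
  assumes "y \<in> V" "x \<in> ancestors par r y"
  shows "y \<notin> ancestors par r x"
proof
  assume "y \<in> ancestors par r x"
  moreover have "x \<in> V" "depth par r x < depth par r y"
    using ancestor_in_V_depth_less[OF assms] by auto
  ultimately show False using ancestor_in_V_depth_less[of x y] by auto
qed

lemma ancestor_funpow:
  assumes "v \<in> V" "0 < i" "i < j" "j \<le> depth par r v"
  shows "(par ^^ j) v \<in> ancestors par r ((par ^^ i) v)"
proof -
  have "(par ^^ j) v = (par ^^ (j - i)) ((par ^^ i) v)"
    using assms by (simp add: funpow_funpow_le)
  then show ?thesis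
    using assms depth_funpow unfolding ancestors_def by (intro CollectI exI[of _ "j - i"]) auto
qed

lemma ancestors_trans:
  assumes "v \<in> V" "x \<in> ancestors par r v" "y \<in> ancestors par r x"
  shows "y \<in> ancestors par r v"
proof -
  obtain k where k: "0 < k" "k \<le> depth par r v" "x = (par ^^ k) v"
    using assms(2) unfolding ancestors_def by blast
  obtain j where j: "0 < j" "j \<le> depth par r x" "y = (par ^^ j) x"
    using assms(3) unfolding ancestors_def by blast
  have "y = (par ^^ (j + k)) v" "j + k \<le> depth par r v"
    using j k depth_funpow[OF assms(1)] by (auto simp: funpow_add)
  then show ?thesis unfolding ancestors_def using j by auto
qed

lemma ancestors_linear:
  assumes "v \<in> V" "x \<in> ancestors par r v" "y \<in> ancestors par r v"
  shows "x = y \<or> x \<in> ancestors par r y \<or> y \<in> ancestors par r x"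
proof -
  obtain k where "0 < k" "k \<le> depth par r v" "x = (par ^^ k) v"
    using assms(2) unfolding ancestors_def by blast
  moreover obtain j where "0 < j" "j \<le> depth par r v" "y = (par ^^ j) v"
    using assms(3) unfolding ancestors_def by blast
  ultimately show ?thesis
    using ancestor_funpow[OF assms(1)] by (cases k j rule: linorder_cases) auto
qed

lemma subtree_mono: "w \<in> subtree V par r u \<Longrightarrow> subtree V par r w \<subseteq> subtree V par r u"
  using ancestors_trans unfolding subtree_def by blast

lemma vars_mono: "w \<in> subtree V par r u \<Longrightarrow> vars V par r var w \<subseteq> vars V par r var u"
  using subtree_mono unfolding vars_def by blast

lemma in_subtree_of_ancestor: "w \<in> V \<Longrightarrow> x \<in> ancestors par r w \<Longrightarrow> w \<in> subtree V par r x"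
  unfolding subtree_def by blast

lemma ancestors_below_ancestor:
  assumes "w \<in> V" "u \<in> ancestors par r w"
  shows "ancestors par r w = insert u (ancestors par r u \<union> tpath V par r w u)"
proof (intro equalityI subsetI)
  fix x assume x: "x \<in> ancestors par r w"
  have "x \<in> V" using x ancestors_subset_V[OF assms(1)] by blast
  then show "x \<in> insert u (ancestors par r u \<union> tpath V par r w u)"
    using ancestors_linear[OF assms(1) x assms(2)] x
    unfolding tpath_def subtree_def by auto
next
  fix x assume "x \<in> insert u (ancestors par r u \<union> tpath V par r w u)"
  then show "x \<in> ancestors par r w"
    using assms ancestors_trans unfolding tpath_def by blast
qed

lemma lowest_ancestor_in:
  assumes u: "u \<in> V" and ne: "ancestors par r u \<inter> R \<noteq> {}"
  obtains a where "lsa par r u R = Some a" "a \<in> ancestors par r u \<inter> R"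
    "\<forall>b\<in>ancestors par r u \<inter> R. b = a \<or> b \<in> ancestors par r a"
proof -
  let ?A = "ancestors par r u \<inter> R"
  let ?lowest = "\<lambda>a. a \<in> ?A \<and> (\<forall>b\<in>?A. b = a \<or> b \<in> ancestors par r a)"
  have AV: "?A \<subseteq> V" using ancestors_subset_V[OF u] by blast
  then have "finite ?A" using finite_V finite_subset by blast
  then have "Max (depth par r ` ?A) \<in> depth par r ` ?A" using ne by (intro Max_in) auto
  then obtain a where a: "a \<in> ?A" "depth par r a = Max (depth par r ` ?A)" by auto
  have deepest: "depth par r b \<le> depth par r a" if "b \<in> ?A" for b
    using a(2) \<open>finite ?A\<close> that by simp
  have "?lowest a"
  proof (intro conjI ballI a(1))
    fix b assume b: "b \<in> ?A"
    have "a \<notin> ancestors par r b"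
      using deepest[OF b] ancestor_in_V_depth_less[of b a] b AV by auto
    then show "b = a \<or> b \<in> ancestors par r a"
      using ancestors_linear[OF u] a(1) b by blast
  qed
  moreover have "a' = a" if "?lowest a'" for a'
  proof (rule ccontr)
    assume neq: "a' \<noteq> a"
    have "a' \<in> ?A" "a \<in> ?A" using that \<open>?lowest a\<close> by blast+
    then have "a' \<in> ancestors par r a" "a \<in> ancestors par r a'"
      using that \<open>?lowest a\<close> neq neq[symmetric] by blast+
    then show False using ancestors_asym \<open>a \<in> ?A\<close> AV by blast
  qed
  ultimately have "(THE a. ?lowest a) = a" by (rule the_equality)
  then have "lsa par r u R = Some a" using ne unfolding lsa_def by simp
  with \<open>?lowest a\<close> show thesis using that by blast
qed

definition topmost_covered :: "('a \<Rightarrow> 'x) \<Rightarrow> 'a set \<Rightarrow> 'a \<Rightarrow> 'x set \<Rightarrow> bool" where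
  "topmost_covered var S w Zq \<longleftrightarrow> vars V par r var w \<subseteq> Zq
     \<and> (\<forall>x\<in>ancestors par r w \<inter> S. \<not> vars V par r var x \<subseteq> Zq)"

lemma Iq_eq_topmost_covered:
  "Iq V par r var Zq w S = (if w \<in> S \<and> topmost_covered var S w Zq then 1 else 0)"
  unfolding Iq_def topmost_covered_def by auto

lemma topmost_covered_insert_self:
  "u \<in> V \<Longrightarrow> topmost_covered var (insert u S) u Zq = topmost_covered var S u Zq"
  using not_ancestor_self unfolding topmost_covered_def by auto

lemma topmost_covered_lsa:
  assumes u: "u \<in> V"
  shows "topmost_covered var S u Zq
     = topmost_covered var (set_option (lsa par r u S)) u Zq"
proof (cases "ancestors par r u \<inter> S = {}")
  case True
  then show ?thesis unfolding lsa_def topmost_covered_def by simp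
next
  case False
  then obtain a where a: "lsa par r u S = Some a" "a \<in> ancestors par r u \<inter> S"
    "\<forall>b\<in>ancestors par r u \<inter> S. b = a \<or> b \<in> ancestors par r a"
    using lowest_ancestor_in[OF u] by blast
  have "a \<in> V" using a(2) ancestors_subset_V[OF u] by blast
  have "vars V par r var a \<subseteq> vars V par r var b" if b: "b \<in> ancestors par r u \<inter> S" for b
  proof (cases "b = a")
    case False
    then have "a \<in> subtree V par r b" using a(3) b \<open>a \<in> V\<close> in_subtree_of_ancestor by blast
    then show ?thesis by (rule vars_mono)
  qed simp
  then show ?thesis using a(1,2) unfolding topmost_covered_def by auto
qed

lemma EI_lsa_eq_EI_insert:
  assumes "u \<in> V" "u \<notin> R"
  shows "EI_lsa V par r var Q Pr Z u (lsa par r u R) = EI V par r var Q Pr Z u (insert u R)"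
proof -
  have "EI_lsa V par r var Q Pr Z u (lsa par r u R)
      = EI V par r var Q Pr Z u (insert u (set_option (lsa par r u R)))"
    unfolding EI_lsa_def by (cases "lsa par r u R") simp_all
  also have "\<dots> = EI V par r var Q Pr Z u (insert u R)"
    unfolding EI_def Iq_eq_topmost_covered using assms
    by (simp add: topmost_covered_insert_self topmost_covered_lsa[where S = R])
  finally show ?thesis .
qed

lemma Iq_insert_ancestor:
  assumes "w \<in> R" "u \<in> ancestors par r w"
  shows "Iq V par r var Zq w (insert u R)
     = (if vars V par r var u \<subseteq> Zq then 0 else Iq V par r var Zq w R)"
  using assms unfolding Iq_def by auto

lemma Iq_below_covered:
  assumes R: "R \<subseteq> V" "u \<notin> R" and w: "w \<in> R" "u \<in> ancestors par r w"
    and cov: "vars V par r var u \<subseteq> Zq"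
  shows "Iq V par r var Zq w R
     = (if topmost_covered var R u Zq \<and> w \<in> hsd V par r u R then 1 else 0)"
proof -
  have wV: "w \<in> V" using w R by blast
  have wT: "w \<in> subtree V par r u" using wV w(2) unfolding subtree_def by blast
  have path_covered: "vars V par r var x \<subseteq> Zq" if "x \<in> tpath V par r w u" for x
    using that cov vars_mono[of x u var] unfolding tpath_def by blast
  have "(\<forall>x\<in>ancestors par r w \<inter> R. \<not> vars V par r var x \<subseteq> Zq)
      \<longleftrightarrow> (\<forall>x\<in>ancestors par r u \<inter> R. \<not> vars V par r var x \<subseteq> Zq)
        \<and> (\<forall>x\<in>tpath V par r w u \<inter> R. \<not> vars V par r var x \<subseteq> Zq)"
    unfolding ancestors_below_ancestor[OF wV w(2)] using R(2) by blast
  also have "(\<forall>x\<in>tpath V par r w u \<inter> R. \<not> vars V par r var x \<subseteq> Zq) \<longleftrightarrow> tpath V par r w u \<inter> R = {}"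
    using path_covered by blast
  finally have "topmost_covered var R w Zq
      \<longleftrightarrow> topmost_covered var R u Zq \<and> tpath V par r w u \<inter> R = {}"
    using cov vars_mono[OF wT, of var] unfolding topmost_covered_def by blast
  then show ?thesis
    using w wT unfolding Iq_eq_topmost_covered hsd_def by auto
qed

lemma Iq_insert_diff:
  assumes R: "R \<subseteq> V" "u \<in> V" "u \<notin> R" and w: "w \<in> R"
  shows "Iq V par r var Zq w (insert u R) - Iq V par r var Zq w R
     = - (if topmost_covered var R u Zq \<and> w \<in> hsd V par r u R then 1 else 0)"
proof (cases "u \<in> ancestors par r w")
  case True
  show ?thesis
  proof (cases "vars V par r var u \<subseteq> Zq")
    case covered: True
    then show ?thesis
      using Iq_insert_ancestor[OF w True, where var = var and Zq = Zq]
        Iq_below_covered[OF R(1,3) w True covered] by simp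
  next
    case False
    then show ?thesis
      using Iq_insert_ancestor[OF w True, where var = var and Zq = Zq]
      unfolding topmost_covered_def by simp
  qed
next
  case False
  then have "w \<notin> hsd V par r u R" using w R unfolding hsd_def subtree_def by auto
  then show ?thesis using False w unfolding Iq_def by auto
qed

lemma EI_insert_diff:
  assumes "R \<subseteq> V" "u \<in> V" "u \<notin> R" "w \<in> R"
  shows "EI V par r var Q Pr Z w (insert u R) - EI V par r var Q Pr Z w R
     = - (if w \<in> hsd V par r u R then EI V par r var Q Pr Z u (insert u R) else 0)"
proof -
  have "Iq V par r var Zq w (insert u R) - Iq V par r var Zq w R
      = - (if w \<in> hsd V par r u R then Iq V par r var Zq u (insert u R) else 0)" for Zq
    using Iq_insert_diff[OF assms, where var = var and Zq = Zq] assms(3,4)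
      Iq_eq_topmost_covered[of var Zq u "insert u R"]
      topmost_covered_insert_self[OF assms(2), where var = var and S = R and Zq = Zq]
    by auto
  then have "EI V par r var Q Pr Z w (insert u R) - EI V par r var Q Pr Z w R
      = (\<Sum>q\<in>Q. - (if w \<in> hsd V par r u R then Pr q * Iq V par r var (Z q) u (insert u R) else 0))"
    unfolding EI_def sum_subtractf[symmetric] right_diff_distrib[symmetric]
    by (intro sum.cong refl) simp
  also have "\<dots> = - (if w \<in> hsd V par r u R then EI V par r var Q Pr Z u (insert u R) else 0)"
    unfolding EI_def by (simp add: sum_negf)
  finally show ?thesis .
qed

lemma sum_EI_insert_diff:
  assumes R: "R \<subseteq> V" "u \<in> V" "u \<notin> R"
  shows "(\<Sum>w\<in>R. (EI V par r var Q Pr Z w (insert u R) - EI V par r var Q Pr Z w R) * c w)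
     = - EI V par r var Q Pr Z u (insert u R) * (\<Sum>v\<in>hsd V par r u R. c v)"
proof -
  let ?H = "hsd V par r u R" and ?E = "EI V par r var Q Pr Z u (insert u R)"
  have "finite R" using finite_subset[OF R(1) finite_V] .
  have "(\<Sum>w\<in>R. (EI V par r var Q Pr Z w (insert u R) - EI V par r var Q Pr Z w R) * c w)
      = - (\<Sum>w\<in>R. if w \<in> ?H then ?E * c w else 0)"
    unfolding sum_negf[symmetric] by (rule sum.cong[OF refl]) (simp add: EI_insert_diff[OF R])
  also have "\<dots> = - (\<Sum>w\<in>R \<inter> ?H. ?E * c w)"
    using \<open>finite R\<close> by (simp add: sum.inter_restrict)
  also have "R \<inter> ?H = ?H" unfolding hsd_def by blast
  finally show ?thesis by (simp only: mult_minus_left sum_distrib_left sum_negf)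
qed

end

lemma benefit_insert_diff:
  assumes "finite R" "u \<notin> R"
  shows "benefit V par r var Q Pr Z c (insert u R) - benefit V par r var Q Pr Z c R
     = EI V par r var Q Pr Z u (insert u R) * Ctot V par r c u
       + (\<Sum>w\<in>R. (EI V par r var Q Pr Z w (insert u R) - EI V par r var Q Pr Z w R) * Ctot V par r c w)"
  using assms unfolding benefit_def by (simp add: sum_subtractf left_diff_distrib)

theorem lemma6:
  fixes V :: "'a set" and par :: "'a \<Rightarrow> 'a" and r :: 'a
    and var :: "'a \<Rightarrow> 'x" and Q :: "'q set" and Pr :: "'q \<Rightarrow> real"
    and Z :: "'q \<Rightarrow> 'x set" and c :: "'a \<Rightarrow> real" and R :: "'a set" and u :: 'a
  assumes "rooted_tree V par r"
    and "finite Q" and "\<forall>q\<in>Q. Pr q \<ge> 0" and "(\<Sum>q\<in>Q. Pr q) = 1"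
    and "R \<subseteq> V" and "u \<in> V - R"
  shows "benefit V par r var Q Pr Z c (R \<union> {u}) - benefit V par r var Q Pr Z c R
       = EI_lsa V par r var Q Pr Z u (lsa par r u R)
         * (Ctot V par r c u - (\<Sum>v\<in>hsd V par r u R. Ctot V par r c v))"
proof -
  interpret finite_rooted_tree V par r by (rule finite_rooted_tree.intro) fact
  have u: "u \<in> V" "u \<notin> R" using assms(6) by auto
  have "finite R" using finite_subset[OF assms(5) finite_V] .
  let ?E = "EI V par r var Q Pr Z u (insert u R)"
  have "R \<union> {u} = insert u R" by simp
  then have "benefit V par r var Q Pr Z c (R \<union> {u}) - benefit V par r var Q Pr Z c R
      = ?E * Ctot V par r c u
        + (\<Sum>w\<in>R. (EI V par r var Q Pr Z w (insert u R) - EI V par r var Q Pr Z w R) * Ctot V par r c w)"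
    using benefit_insert_diff[OF \<open>finite R\<close> u(2)] by simp
  also have "\<dots> = ?E * (Ctot V par r c u - (\<Sum>v\<in>hsd V par r u R. Ctot V par r c v))"
    unfolding sum_EI_insert_diff[OF assms(5) u] by (simp add: right_diff_distrib)
  also have "?E = EI_lsa V par r var Q Pr Z u (lsa par r u R)"
    by (rule EI_lsa_eq_EI_insert[OF u, symmetric])
  finally show ?thesis .
qed

end
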